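(* Let $m\in\mathbb{N}$, $T>0$. Let $\varphi:\mathbb{R}\to\mathbb{R}$ be continuous and globally bounded, i.e. there is $L_1>0$ with $|\varphi(s)|\le L_1$ for all $s\in\mathbb{R}$. Fix $a,b_1,\ldots,b_m\in\mathbb{R}$ and, for $u=(u^1,\ldots,u^m)\in(\mathcal{L}^2([0,T];\mathbb{R}))^m$, define $\pi(u):[0,T]\to\mathbb{R}$ by \[ \pi(u)(t):=a+\sum_{j=1}^m b_j\int_0^t\Big(\int_0^r u^j(s)\,ds\Big)dr . \] For $j\in\{1,\ldots,m\}$ and $r,t\in[0,T]$, define $\eta^{\varphi}_j(\cdot,r),\rho^{\varphi}_j(\cdot,t):(\mathcal{L}^2([0,T];\mathbb{R}))^m\to\mathbb{R}$ by \[ \eta^{\varphi}_j(u,r):=\int_0^r u^j(s)\,\varphi(\pi(u)(s))\,ds,\qquad \rho^{\varphi}_j(u,t):=\int_0^t\eta^{\varphi}_j(u,r)\,dr . \] If $\{u_k\}\subset(\mathcal{L}^2([0,T];\mathbb{R}))^m$ converges weakly to $u$, then $\lim_{k\to\infty}\eta^{\varphi}_j(u_k,r)=\eta^{\varphi}_j(u,r)$ for every $r\in[0,T]$ and $\lim_{k\to\infty}\rho^{\varphi}_j(u_k,t)=\rho^{\varphi}_j(u,t)$ for every $t\in[0,T]$, for each $j=1,\ldots,m$. That is, $\eta^{\varphi}_j(\cdot,r)$ and $\rho^{\varphi}_j(\cdot,t)$ are weakly sequentially continuous for every $r,t\in[0,T]$.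
   Context: $\mathcal{L}^2([0,T];\mathbb{R})$ denotes the Hilbert space of (classes of) Lebesgue measurable square-integrable real functions on $[0,T]$; weak convergence refers to the weak topology of the product space $(\mathcal{L}^2([0,T];\mathbb{R}))^m$. *)

theory Defs
  imports "HOL-Analysis.Analysis"
begin

definition L2 :: "real \<Rightarrow> (real \<Rightarrow> real) \<Rightarrow> bool" where
  "L2 T f \<longleftrightarrow> set_borel_measurable lebesgue {0..T} f
      \<and> set_integrable lebesgue {0..T} (\<lambda>s. (f s)^2)"

definition L2m :: "nat \<Rightarrow> real \<Rightarrow> (nat \<Rightarrow> real \<Rightarrow> real) \<Rightarrow> bool" where
  "L2m m T u \<longleftrightarrow> (\<forall>j\<in>{1..m}. L2 T (u j))"

definition weak_conv_L2m ::
  "nat \<Rightarrow> real \<Rightarrow> (nat \<Rightarrow> nat \<Rightarrow> real \<Rightarrow> real) \<Rightarrow> (nat \<Rightarrow> real \<Rightarrow> real) \<Rightarrow> bool" where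
  "weak_conv_L2m m T U u \<longleftrightarrow>
     (\<forall>j\<in>{1..m}. \<forall>g. L2 T g \<longrightarrow>
        (\<lambda>k. LINT s:{0..T}|lebesgue. U k j s * g s) \<longlonglongrightarrow> (LINT s:{0..T}|lebesgue. u j s * g s))"

definition piu :: "real \<Rightarrow> (nat \<Rightarrow> real) \<Rightarrow> nat \<Rightarrow> (nat \<Rightarrow> real \<Rightarrow> real) \<Rightarrow> real \<Rightarrow> real" where
  "piu a b m u t = a + (\<Sum>j=1..m. b j *
      (LINT r:{0..t}|lebesgue. (LINT s:{0..r}|lebesgue. u j s)))"

definition eta :: "(real \<Rightarrow> real) \<Rightarrow> real \<Rightarrow> (nat \<Rightarrow> real) \<Rightarrow> nat \<Rightarrow> nat
    \<Rightarrow> (nat \<Rightarrow> real \<Rightarrow> real) \<Rightarrow> real \<Rightarrow> real" where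
  "eta \<phi> a b m j u r = (LINT s:{0..r}|lebesgue. u j s * \<phi> (piu a b m u s))"

definition rho :: "(real \<Rightarrow> real) \<Rightarrow> real \<Rightarrow> (nat \<Rightarrow> real) \<Rightarrow> nat \<Rightarrow> nat
    \<Rightarrow> (nat \<Rightarrow> real \<Rightarrow> real) \<Rightarrow> real \<Rightarrow> real" where
  "rho \<phi> a b m j u t = (LINT r:{0..t}|lebesgue. eta \<phi> a b m j u r)"

end

theory Submission
  imports Defs
begin

(* A weakly convergent sequence u_k pairs convergently with every bounded measurable test
   function, so by the uniform boundedness principle, which a gliding hump argument gives
   directly, it is bounded in L^1. This bound makes the maps pi(u_k) uniformly Lipschitz on
   [0,T], and testing against indicator functions gives pi(u_k)(t) -> pi(u)(t) for every t;
   together these give uniform convergence, hence phi(pi(u_k)) -> phi(pi(u)) uniformly. Now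
   eta(u_k,r) is the integral over [0,r] of u_k phi(pi(u)), which converges by weak convergence,
   plus that of u_k (phi(pi(u_k)) - phi(pi(u))), which is at most the L^1 bound times the
   uniform error. Finally |eta| is at most L1 times the L^1 bound, so the convergence of rho
   follows by dominated convergence. *)

lemma L2_absolutely_integrable:
  assumes "L2 T f"
  shows "f absolutely_integrable_on {0..T}"
proof -
  have meas: "f \<in> borel_measurable (lebesgue_on {0..T})"
    using assms by (simp add: L2_def set_borel_measurable_def borel_measurable_restrict_space_iff)
  have "(\<lambda>s. (f s)\<^sup>2) absolutely_integrable_on {0..T}"
    using assms by (simp add: L2_def)
  then have "(\<lambda>s. 1 + (f s)\<^sup>2) integrable_on {0..T}"
    by (intro integrable_add integrable_on_const set_lebesgue_integral_eq_integral(1)) auto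
  moreover have "norm (f s) \<le> 1 + (f s)\<^sup>2" for s
  proof -
    have "0 \<le> (\<bar>f s\<bar> - 1)\<^sup>2" by simp
    then show ?thesis by (simp add: power2_diff)
  qed
  ultimately show ?thesis
    by (intro measurable_bounded_by_integrable_imp_absolutely_integrable[OF meas]) auto
qed

lemma L2_if_bounded_measurable:
  fixes g :: "real \<Rightarrow> real"
  assumes meas: "g \<in> borel_measurable (lebesgue_on {0..T})"
    and bound: "\<And>s. s \<in> {0..T} \<Longrightarrow> \<bar>g s\<bar> \<le> M"
  shows "L2 T g"
proof -
  have "bounded (g ` {0..T})"
    unfolding bounded_iff using bound by (auto intro!: exI[of _ M])
  moreover have "g absolutely_integrable_on {0..T}"
    using bound by (intro measurable_bounded_by_integrable_imp_absolutely_integrable[OF meas, of "\<lambda>_. M"]) auto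
  ultimately have "(\<lambda>s. g s * g s) absolutely_integrable_on {0..T}"
    by (intro absolutely_integrable_bounded_measurable_product_real[OF meas]) auto
  with meas show ?thesis
    by (simp add: L2_def set_borel_measurable_def borel_measurable_restrict_space_iff power2_eq_square)
qed

lemma absolutely_integrable_mult_bounded:
  fixes y g :: "real \<Rightarrow> real"
  assumes "y absolutely_integrable_on S" "S \<in> sets lebesgue"
    and "g \<in> borel_measurable (lebesgue_on S)" "\<And>s. s \<in> S \<Longrightarrow> \<bar>g s\<bar> \<le> M"
  shows "(\<lambda>s. y s * g s) absolutely_integrable_on S"
proof -
  have "bounded (g ` S)"
    unfolding bounded_iff using assms(4) by (auto intro!: exI[of _ M])
  then have "(\<lambda>s. g s * y s) absolutely_integrable_on S"
    using assms by (intro absolutely_integrable_bounded_measurable_product_real) auto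
  then show ?thesis
    by (simp add: mult.commute)
qed

lemma abs_integral_mult_bounded_le:
  fixes y g :: "real \<Rightarrow> real"
  assumes "y absolutely_integrable_on S" "S \<in> sets lebesgue"
    and "g \<in> borel_measurable (lebesgue_on S)" "\<And>s. s \<in> S \<Longrightarrow> \<bar>g s\<bar> \<le> M"
  shows "\<bar>integral S (\<lambda>s. y s * g s)\<bar> \<le> M * integral S (\<lambda>s. \<bar>y s\<bar>)"
proof -
  have "(\<lambda>s. y s * g s) integrable_on S"
    using absolutely_integrable_mult_bounded[OF assms] by (rule set_lebesgue_integral_eq_integral(1))
  moreover have "(\<lambda>s. M * \<bar>y s\<bar>) integrable_on S"
    using assms(1) by (simp add: absolutely_integrable_on_def integrable_on_mult_right)
  moreover have "norm (y s * g s) \<le> M * \<bar>y s\<bar>" if "s \<in> S" for s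
    using assms(4)[OF that] by (simp add: abs_mult mult.commute mult_right_mono)
  ultimately have "norm (integral S (\<lambda>s. y s * g s)) \<le> integral S (\<lambda>s. M * \<bar>y s\<bar>)"
    by (rule integral_norm_bound_integral)
  then show ?thesis
    by simp
qed

lemma abs_suminf_minus_sum_le_geometric:
  fixes f :: "nat \<Rightarrow> real"
  assumes "0 \<le> q" "q < 1" and le: "\<And>i. \<bar>f i\<bar> \<le> q ^ i"
  shows "summable f" "\<bar>suminf f - (\<Sum>i<n. f i)\<bar> \<le> q ^ n / (1 - q)"
proof -
  have geo: "summable (\<lambda>i. q ^ i)"
    using assms by simp
  have abs: "summable (\<lambda>i. \<bar>f i\<bar>)"
    by (rule summable_comparison_test'[OF geo]) (use le in simp)
  then show f: "summable f"
    by (rule summable_rabs_cancel)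
  have "\<bar>suminf f - (\<Sum>i<n. f i)\<bar> = \<bar>\<Sum>i. f (i + n)\<bar>"
    by (simp add: suminf_minus_initial_segment[OF f])
  also have "\<dots> \<le> (\<Sum>i. \<bar>f (i + n)\<bar>)"
    by (rule summable_rabs[OF summable_ignore_initial_segment[OF abs]])
  also have "\<dots> \<le> (\<Sum>i. q ^ (i + n))"
    by (intro suminf_le le summable_ignore_initial_segment abs geo)
  also have "\<dots> = q ^ n / (1 - q)"
    using assms by (simp add: power_add suminf_mult2[OF geo, symmetric] suminf_geometric)
  finally show "\<bar>suminf f - (\<Sum>i<n. f i)\<bar> \<le> q ^ n / (1 - q)" .
qed

text \<open>The \<open>n\<close>-th hump \<open>(1/3)^n g n\<close> gets the sign of \<open>F n\<close> at the sum of the previous humps,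
  so that it cannot cancel their contribution.\<close>

primrec gliding_hump ::
  "(nat \<Rightarrow> (real \<Rightarrow> real) \<Rightarrow> real) \<Rightarrow> (nat \<Rightarrow> real \<Rightarrow> real) \<Rightarrow> nat \<Rightarrow> real \<Rightarrow> real" where
  "gliding_hump F g 0 = (\<lambda>s. 0)"
| "gliding_hump F g (Suc n) = (\<lambda>s. gliding_hump F g n s
      + (if 0 \<le> F n (gliding_hump F g n) then 1 else -1) * (1/3) ^ n * g n s)"

lemma gliding_hump_eq_sum:
  "gliding_hump F g n s = (\<Sum>i<n. (if 0 \<le> F i (gliding_hump F g i) then 1 else -1) * (1/3) ^ i * g i s)"
  by (induction n) simp_all

lemma abs_integral_signed_hump_ge:
  fixes y G R :: "real \<Rightarrow> real"
  assumes y: "y absolutely_integrable_on S" and S: "S \<in> sets lebesgue"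
    and G_meas: "G \<in> borel_measurable (lebesgue_on S)" and G_bound: "\<And>s. \<bar>G s\<bar> \<le> M"
    and R_meas: "R \<in> borel_measurable (lebesgue_on S)" and R_bound: "\<And>s. \<bar>R s\<bar> \<le> \<delta>"
    and c: "c = (if 0 \<le> integral S (\<lambda>s. y s * G s) then 1 else -1)" and "0 \<le> q"
  shows "(q - \<delta>) * integral S (\<lambda>s. \<bar>y s\<bar>) \<le> \<bar>integral S (\<lambda>s. y s * (G s + c * q * sgn (y s) + R s))\<bar>"
proof -
  define N where "N = integral S (\<lambda>s. \<bar>y s\<bar>)"
  have abs_y: "(\<lambda>s. \<bar>y s\<bar>) integrable_on S"
    using y by (simp add: absolutely_integrable_on_def)
  have "0 \<le> N"
    unfolding N_def by (rule integral_nonneg[OF abs_y]) simp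
  have int_G: "(\<lambda>s. y s * G s) integrable_on S"
    by (rule set_lebesgue_integral_eq_integral(1)[OF absolutely_integrable_mult_bounded[OF y S G_meas G_bound]])
  have int_R: "(\<lambda>s. y s * R s) integrable_on S"
    by (rule set_lebesgue_integral_eq_integral(1)[OF absolutely_integrable_mult_bounded[OF y S R_meas R_bound]])
  have int_hump: "(\<lambda>s. c * q * \<bar>y s\<bar>) integrable_on S"
    by (rule integrable_on_mult_right[OF abs_y])
  have "y s * (G s + c * q * sgn (y s) + R s) = y s * G s + c * q * \<bar>y s\<bar> + y s * R s" for s
    by (simp add: sgn_real_def algebra_simps)
  then have split: "integral S (\<lambda>s. y s * (G s + c * q * sgn (y s) + R s))
      = integral S (\<lambda>s. y s * G s) + c * q * N + integral S (\<lambda>s. y s * R s)"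
    unfolding N_def
    by (simp add: integral_add[OF integrable_add[OF int_G int_hump] int_R] integral_add[OF int_G int_hump])
  have "0 \<le> q * N"
    using \<open>0 \<le> q\<close> \<open>0 \<le> N\<close> by simp
  then have "q * N \<le> \<bar>integral S (\<lambda>s. y s * G s) + c * q * N\<bar>"
    by (simp add: c)
  moreover have "\<bar>integral S (\<lambda>s. y s * R s)\<bar> \<le> \<delta> * N"
    unfolding N_def by (rule abs_integral_mult_bounded_le[OF y S R_meas R_bound])
  ultimately show ?thesis
    unfolding split N_def[symmetric] by (simp add: left_diff_distrib)
qed

lemma gliding_hump_test_function:
  fixes y :: "nat \<Rightarrow> real \<Rightarrow> real"
  assumes S: "S \<in> sets lebesgue" and y: "\<And>n. y n absolutely_integrable_on S"
  obtains h where "h \<in> borel_measurable (lebesgue_on S)" "\<And>s. \<bar>h s\<bar> \<le> 3/2"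
    "\<And>n. (1/3) ^ n / 2 * integral S (\<lambda>s. \<bar>y n s\<bar>) \<le> \<bar>integral S (\<lambda>s. y n s * h s)\<bar>"
proof -
  define F where "F n G = integral S (\<lambda>s. y n s * G s)" for n G
  define g where "g n s = sgn (y n s)" for n s
  define c where "c n = (if 0 \<le> F n (gliding_hump F g n) then 1 else -1 :: real)" for n
  define H where "H = gliding_hump F g"
  define h where "h s = (\<Sum>i. c i * (1/3) ^ i * g i s)" for s
  have term_le: "\<bar>c i * (1/3) ^ i * g i s\<bar> \<le> (1/3) ^ i" for i s
    by (simp add: c_def g_def abs_mult sgn_real_def)
  have H_eq_sum: "H n s = (\<Sum>i<n. c i * (1/3) ^ i * g i s)" for n s
    unfolding H_def c_def by (rule gliding_hump_eq_sum)
  have tail: "\<bar>h s - H n s\<bar> \<le> (1/3) ^ n * (3/2)" for n s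
    using abs_suminf_minus_sum_le_geometric(2)[of "1/3" "\<lambda>i. c i * (1/3) ^ i * g i s" n] term_le
    by (simp add: h_def H_eq_sum)
  have h_bound: "\<bar>h s\<bar> \<le> 3/2" for s
    using tail[of s 0] by (simp add: H_def)
  have H_bound: "\<bar>H n s\<bar> \<le> 3" for n s
    using tail[of s n] h_bound[of s] power_le_one[of "1/3::real" n] by linarith
  have g_meas: "g n \<in> borel_measurable (lebesgue_on S)" for n
    using y absolutely_integrable_measurable[OF S] unfolding g_def
    by (intro measurable_compose[OF _ borel_measurable_sgn]) auto
  have H_meas: "H n \<in> borel_measurable (lebesgue_on S)" for n
    unfolding H_eq_sum by (intro borel_measurable_sum borel_measurable_times borel_measurable_const g_meas)
  have h_meas: "h \<in> borel_measurable (lebesgue_on S)"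
    unfolding h_def by (intro borel_measurable_suminf borel_measurable_times borel_measurable_const g_meas)
  show ?thesis
  proof (rule that[OF h_meas h_bound])
    fix n
    have c_n: "c n = (if 0 \<le> integral S (\<lambda>s. y n s * H n s) then 1 else -1)"
      by (simp add: c_def F_def H_def)
    have R_meas: "(\<lambda>s. h s - H (Suc n) s) \<in> borel_measurable (lebesgue_on S)"
      using h_meas H_meas by measurable
    have R_bound: "\<bar>h s - H (Suc n) s\<bar> \<le> (1/3) ^ n / 2" for s
      using tail[of s "Suc n"] by simp
    have "((1/3) ^ n - (1/3) ^ n / 2) * integral S (\<lambda>s. \<bar>y n s\<bar>)
        \<le> \<bar>integral S (\<lambda>s. y n s * (H n s + c n * (1/3) ^ n * sgn (y n s) + (h s - H (Suc n) s)))\<bar>"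
      by (rule abs_integral_signed_hump_ge[OF y S H_meas H_bound R_meas R_bound c_n]) simp
    also have "(\<lambda>s. y n s * (H n s + c n * (1/3) ^ n * sgn (y n s) + (h s - H (Suc n) s))) = (\<lambda>s. y n s * h s)"
      by (simp add: H_def c_def g_def)
    finally show "(1/3) ^ n / 2 * integral S (\<lambda>s. \<bar>y n s\<bar>) \<le> \<bar>integral S (\<lambda>s. y n s * h s)\<bar>"
      by simp
  qed
qed

lemma Bseq_integral_abs_if_Bseq_pairings:
  fixes x :: "nat \<Rightarrow> real \<Rightarrow> real"
  assumes S: "S \<in> sets lebesgue" and x: "\<And>k. x k absolutely_integrable_on S"
    and pairings: "\<And>g M. g \<in> borel_measurable (lebesgue_on S) \<Longrightarrow> (\<And>s. s \<in> S \<Longrightarrow> \<bar>g s\<bar> \<le> M)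
      \<Longrightarrow> Bseq (\<lambda>k. integral S (\<lambda>s. x k s * g s))"
  shows "Bseq (\<lambda>k. integral S (\<lambda>s. \<bar>x k s\<bar>))"
proof (rule ccontr)
  assume unbounded: "\<not> ?thesis"
  have nonneg: "0 \<le> integral S (\<lambda>s. \<bar>x k s\<bar>)" for k
    using x by (intro integral_nonneg) (auto simp: absolutely_integrable_on_def)
  have "\<exists>k. 2 * 3 ^ n * real n < integral S (\<lambda>s. \<bar>x k s\<bar>)" for n :: nat
    using unbounded nonneg BseqI'[of "\<lambda>k. integral S (\<lambda>s. \<bar>x k s\<bar>)" "2 * 3 ^ n * real n"]
    by (force simp: not_less)
  then obtain kk where kk: "\<And>n. 2 * 3 ^ n * real n < integral S (\<lambda>s. \<bar>x (kk n) s\<bar>)"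
    by metis
  obtain h where h_meas: "h \<in> borel_measurable (lebesgue_on S)" and h_bound: "\<And>s. \<bar>h s\<bar> \<le> 3/2"
    and hump: "\<And>n. (1/3) ^ n / 2 * integral S (\<lambda>s. \<bar>x (kk n) s\<bar>) \<le> \<bar>integral S (\<lambda>s. x (kk n) s * h s)\<bar>"
    using gliding_hump_test_function[OF S x] by blast
  obtain K where K: "\<And>k. \<bar>integral S (\<lambda>s. x k s * h s)\<bar> \<le> K"
    using pairings[OF h_meas h_bound] by (auto simp: Bseq_def)
  obtain n :: nat where "K < real n"
    using reals_Archimedean2 by blast
  moreover have "real n \<le> (1/3) ^ n / 2 * integral S (\<lambda>s. \<bar>x (kk n) s\<bar>)"
    using mult_left_mono[OF less_imp_le[OF kk[of n]], of "(1/3) ^ n / 2"]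
    by (simp add: power_divide)
  ultimately show False
    using hump[of n] K[of "kk n"] by linarith
qed

lemma L2m_absolutely_integrable:
  assumes "L2m m T v" "j \<in> {1..m}" "r \<le> T"
  shows "v j absolutely_integrable_on {0..r}"
proof (rule absolutely_integrable_on_subinterval)
  show "v j absolutely_integrable_on {0..T}"
    using assms by (simp add: L2m_def L2_absolutely_integrable)
qed (use assms in auto)

lemma integral_abs_subinterval_le:
  fixes f :: "real \<Rightarrow> real"
  assumes "f absolutely_integrable_on {a..b}" "r \<in> {a..b}"
  shows "integral {a..r} (\<lambda>s. \<bar>f s\<bar>) \<le> integral {a..b} (\<lambda>s. \<bar>f s\<bar>)"
  using assms absolutely_integrable_on_subinterval[OF assms(1), of a r]
  by (intro integral_subset_le) (auto simp: absolutely_integrable_on_def)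

lemma abs_indefinite_integral_le:
  fixes f :: "real \<Rightarrow> real"
  assumes "f absolutely_integrable_on {a..b}" "r \<in> {a..b}"
  shows "\<bar>integral {a..r} f\<bar> \<le> integral {a..b} (\<lambda>s. \<bar>f s\<bar>)"
proof -
  have "f absolutely_integrable_on {a..r}"
    using assms by (auto intro: absolutely_integrable_on_subinterval)
  then have "norm (integral {a..r} f) \<le> integral {a..r} (\<lambda>s. \<bar>f s\<bar>)"
    by (intro integral_norm_bound_integral) (auto simp: absolutely_integrable_on_def)
  then show ?thesis
    using integral_abs_subinterval_le[OF assms] by simp
qed

lemma lipschitz_on_indefinite_integral:
  fixes f :: "real \<Rightarrow> real"
  assumes f: "f integrable_on {a..b}" and bound: "\<And>s. s \<in> {a..b} \<Longrightarrow> \<bar>f s\<bar> \<le> B" and "0 \<le> B"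
  shows "B-lipschitz_on {a..b} (\<lambda>t. integral {a..t} f)"
proof (rule lipschitz_on_leI)
  fix x y assume xy: "x \<in> {a..b}" "y \<in> {a..b}" "x \<le> y"
  have "integral {a..x} f + integral {x..y} f = integral {a..y} f"
    using xy by (intro Henstock_Kurzweil_Integration.integral_combine integrable_on_subinterval[OF f]) auto
  moreover have "norm (integral {x..y} f) \<le> integral {x..y} (\<lambda>_. B)"
    using xy bound by (intro integral_norm_bound_integral integrable_on_subinterval[OF f]) auto
  ultimately show "dist (integral {a..x} f) (integral {a..y} f) \<le> B * dist x y"
    using xy by (simp add: dist_real_def abs_minus_commute mult.commute)
qed fact

lemma lipschitz_on_sum:
  fixes f :: "'i \<Rightarrow> 'a::metric_space \<Rightarrow> 'b::real_normed_vector"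
  assumes "\<And>i. i \<in> I \<Longrightarrow> (C i)-lipschitz_on X (f i)"
  shows "(\<Sum>i\<in>I. C i)-lipschitz_on X (\<lambda>x. \<Sum>i\<in>I. f i x)"
proof (cases "finite I")
  case True
  then show ?thesis
    using assms by (induction I) (auto intro: lipschitz_on_constant lipschitz_on_add)
qed (simp add: lipschitz_on_constant)

lemma piu_eq_integral:
  assumes v: "L2m m T v" and t: "t \<in> {0..T}"
  shows "piu a b m v t = a + (\<Sum>j=1..m. b j * integral {0..t} (\<lambda>r. integral {0..r} (v j)))"
proof -
  have "(LINT r:{0..t}|lebesgue. LINT s:{0..r}|lebesgue. v j s) = integral {0..t} (\<lambda>r. integral {0..r} (v j))"
    if j: "j \<in> {1..m}" for j
  proof -
    have "(LINT s:{0..r}|lebesgue. v j s) = integral {0..r} (v j)" if "r \<in> {0..t}" for r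
      using that t by (intro set_lebesgue_integral_eq_integral(2) L2m_absolutely_integrable[OF v j]) auto
    then have "(LINT r:{0..t}|lebesgue. LINT s:{0..r}|lebesgue. v j s) = (LINT r:{0..t}|lebesgue. integral {0..r} (v j))"
      by (intro set_lebesgue_integral_cong) auto
    also have "\<dots> = integral {0..t} (\<lambda>r. integral {0..r} (v j))"
      using t by (intro set_lebesgue_integral_eq_integral(2) absolutely_integrable_continuous_real
          indefinite_integral_continuous_1 set_lebesgue_integral_eq_integral(1) L2m_absolutely_integrable[OF v j]) auto
    finally show ?thesis .
  qed
  then show ?thesis
    unfolding piu_def by simp
qed

lemma continuous_on_piu:
  assumes v: "L2m m T v"
  shows "continuous_on {0..T} (piu a b m v)"
proof -
  have "continuous_on {0..T} (\<lambda>t. a + (\<Sum>j=1..m. b j * integral {0..t} (\<lambda>r. integral {0..r} (v j))))"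
    by (intro continuous_intros indefinite_integral_continuous_1 integrable_continuous_interval
        set_lebesgue_integral_eq_integral(1) L2m_absolutely_integrable[OF v]) auto
  then show ?thesis
    by (rule continuous_on_eq) (simp add: piu_eq_integral[OF v])
qed

lemma lipschitz_on_piu:
  assumes v: "L2m m T v" and "0 \<le> B" and bound: "\<And>j. j \<in> {1..m} \<Longrightarrow> integral {0..T} (\<lambda>s. \<bar>v j s\<bar>) \<le> B"
  shows "((\<Sum>j=1..m. \<bar>b j\<bar>) * B)-lipschitz_on {0..T} (piu a b m v)"
proof -
  have "B-lipschitz_on {0..T} (\<lambda>t. integral {0..t} (\<lambda>r. integral {0..r} (v j)))" if j: "j \<in> {1..m}" for j
  proof (rule lipschitz_on_indefinite_integral)
    show "(\<lambda>r. integral {0..r} (v j)) integrable_on {0..T}"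
      by (intro integrable_continuous_interval indefinite_integral_continuous_1
          set_lebesgue_integral_eq_integral(1) L2m_absolutely_integrable[OF v j]) simp
    show "\<bar>integral {0..r} (v j)\<bar> \<le> B" if "r \<in> {0..T}" for r
      using abs_indefinite_integral_le[OF L2m_absolutely_integrable[OF v j order_refl] that] bound[OF j]
      by linarith
  qed fact
  then have "(0 + (\<Sum>j=1..m. \<bar>b j\<bar> * B))-lipschitz_on {0..T}
      (\<lambda>t. a + (\<Sum>j=1..m. b j * integral {0..t} (\<lambda>r. integral {0..r} (v j))))"
    by (intro lipschitz_on_add lipschitz_on_constant lipschitz_on_sum lipschitz_on_cmult_real)
  then have "((\<Sum>j=1..m. \<bar>b j\<bar>) * B)-lipschitz_on {0..T}
      (\<lambda>t. a + (\<Sum>j=1..m. b j * integral {0..t} (\<lambda>r. integral {0..r} (v j))))"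
    by (simp add: sum_distrib_right)
  then show ?thesis
    by (rule lipschitz_on_transform) (simp add: piu_eq_integral[OF v])
qed

lemma abs_piu_le:
  assumes v: "L2m m T v" and "0 \<le> B" and bound: "\<And>j. j \<in> {1..m} \<Longrightarrow> integral {0..T} (\<lambda>s. \<bar>v j s\<bar>) \<le> B"
    and t: "t \<in> {0..T}"
  shows "\<bar>piu a b m v t\<bar> \<le> \<bar>a\<bar> + (\<Sum>j=1..m. \<bar>b j\<bar>) * B * T"
proof -
  have "0 \<in> {0..T}"
    using t by simp
  have "dist (piu a b m v t) (piu a b m v 0) \<le> (\<Sum>j=1..m. \<bar>b j\<bar>) * B * dist t 0"
    by (rule lipschitz_onD[OF lipschitz_on_piu[OF v \<open>0 \<le> B\<close> bound] t \<open>0 \<in> {0..T}\<close>])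
  moreover have "piu a b m v 0 = a"
    using piu_eq_integral[OF v \<open>0 \<in> {0..T}\<close>] by simp
  moreover have "(\<Sum>j=1..m. \<bar>b j\<bar>) * B * \<bar>t\<bar> \<le> (\<Sum>j=1..m. \<bar>b j\<bar>) * B * T"
    using t \<open>0 \<le> B\<close> by (intro mult_left_mono) (auto intro: sum_nonneg)
  ultimately show ?thesis
    by (simp add: dist_real_def)
qed

lemma uniform_limit_if_equi_lipschitz:
  fixes p :: "nat \<Rightarrow> 'a::metric_space \<Rightarrow> 'b::metric_space"
  assumes S: "compact S" and p: "\<And>k. C-lipschitz_on S (p k)" and q: "C-lipschitz_on S q"
    and lim: "\<And>x. x \<in> S \<Longrightarrow> (\<lambda>k. p k x) \<longlonglongrightarrow> q x"
  shows "uniform_limit S p q sequentially"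
proof (rule uniform_limitI)
  fix e :: real assume "0 < e"
  have "0 \<le> C"
    by (rule lipschitz_on_nonneg[OF q])
  define \<delta> where "\<delta> = e / (3 * (C + 1))"
  have "0 < \<delta>"
    using \<open>0 < e\<close> \<open>0 \<le> C\<close> by (simp add: \<delta>_def)
  have "C * \<delta> < e / 3"
    using \<open>0 < e\<close> \<open>0 \<le> C\<close> by (simp add: \<delta>_def field_simps)
  obtain K where "K \<subseteq> S" "finite K" and cover: "S \<subseteq> (\<Union>z\<in>K. ball z \<delta>)"
    using compactE_image[OF S, of S "\<lambda>z. ball z \<delta>"] \<open>0 < \<delta>\<close> by force
  have "eventually (\<lambda>k. \<forall>z\<in>K. dist (p k z) (q z) < e / 3) sequentially"
  proof (rule eventually_ball_finite[OF \<open>finite K\<close>], intro ballI)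
    fix z assume "z \<in> K"
    with \<open>K \<subseteq> S\<close> \<open>0 < e\<close> show "eventually (\<lambda>k. dist (p k z) (q z) < e / 3) sequentially"
      by (intro tendstoD[OF lim]) auto
  qed
  then show "eventually (\<lambda>k. \<forall>x\<in>S. dist (p k x) (q x) < e) sequentially"
  proof (rule eventually_mono, intro ballI)
    fix k x assume near: "\<forall>z\<in>K. dist (p k z) (q z) < e / 3" and "x \<in> S"
    then obtain z where "z \<in> K" "dist z x < \<delta>"
      using cover by auto
    with \<open>K \<subseteq> S\<close> \<open>x \<in> S\<close> have "dist (p k x) (p k z) \<le> C * \<delta>" "dist (q z) (q x) \<le> C * \<delta>"
      using lipschitz_onD[OF p, of x z k] lipschitz_onD[OF q, of z x] \<open>0 \<le> C\<close>
      by (auto simp: dist_commute intro: order_trans[OF _ mult_left_mono[OF less_imp_le]])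
    moreover have "dist (p k x) (q x) \<le> dist (p k x) (p k z) + dist (p k z) (q z) + dist (q z) (q x)"
      by (metis add_right_mono dist_triangle order_trans)
    ultimately show "dist (p k x) (q x) < e"
      using near \<open>z \<in> K\<close> \<open>C * \<delta> < e / 3\<close> by fastforce
  qed
qed

lemma tendsto_integral_mult_uniform_limit_zero:
  fixes y g :: "nat \<Rightarrow> real \<Rightarrow> real"
  assumes S: "S \<in> sets lebesgue" and y: "\<And>k. y k absolutely_integrable_on S"
    and bound: "\<And>k. integral S (\<lambda>s. \<bar>y k s\<bar>) \<le> B"
    and g_meas: "\<And>k. g k \<in> borel_measurable (lebesgue_on S)" and g: "uniform_limit S g (\<lambda>_. 0) sequentially"
  shows "(\<lambda>k. integral S (\<lambda>s. y k s * g k s)) \<longlonglongrightarrow> 0"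
proof (rule tendstoI)
  fix e :: real assume "0 < e"
  have "0 \<le> B"
    using bound[of 0] y[of 0] integral_nonneg[of "\<lambda>s. \<bar>y 0 s\<bar>" S]
    by (auto simp: absolutely_integrable_on_def)
  define \<epsilon> where "\<epsilon> = e / (B + 1)"
  have "0 < \<epsilon>"
    using \<open>0 < e\<close> \<open>0 \<le> B\<close> by (simp add: \<epsilon>_def)
  show "eventually (\<lambda>k. dist (integral S (\<lambda>s. y k s * g k s)) 0 < e) sequentially"
    using uniform_limitD[OF g \<open>0 < \<epsilon>\<close>]
  proof (rule eventually_mono)
    fix k assume "\<forall>s\<in>S. dist (g k s) 0 < \<epsilon>"
    then have "\<bar>integral S (\<lambda>s. y k s * g k s)\<bar> \<le> \<epsilon> * integral S (\<lambda>s. \<bar>y k s\<bar>)"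
      by (intro abs_integral_mult_bounded_le[OF y S g_meas]) auto
    also have "\<dots> \<le> \<epsilon> * B"
      using \<open>0 < \<epsilon>\<close> by (intro mult_left_mono bound) simp
    also have "\<dots> < e"
      using \<open>0 < e\<close> \<open>0 \<le> B\<close> by (simp add: \<epsilon>_def field_simps)
    finally show "dist (integral S (\<lambda>s. y k s * g k s)) 0 < e"
      by simp
  qed
qed

lemma tendsto_integral_mult_uniform_limit:
  fixes y g :: "nat \<Rightarrow> real \<Rightarrow> real"
  assumes S: "S \<in> sets lebesgue" and y: "\<And>k. y k absolutely_integrable_on S"
    and bound: "\<And>k. integral S (\<lambda>s. \<bar>y k s\<bar>) \<le> B"
    and g_meas: "\<And>k. g k \<in> borel_measurable (lebesgue_on S)"
    and g_lim_meas: "g_lim \<in> borel_measurable (lebesgue_on S)"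
    and g_bound: "\<And>k s. s \<in> S \<Longrightarrow> \<bar>g k s\<bar> \<le> M" and g_lim_bound: "\<And>s. s \<in> S \<Longrightarrow> \<bar>g_lim s\<bar> \<le> M"
    and unif: "uniform_limit S g g_lim sequentially"
    and weak: "(\<lambda>k. integral S (\<lambda>s. y k s * g_lim s)) \<longlonglongrightarrow> l"
  shows "(\<lambda>k. integral S (\<lambda>s. y k s * g k s)) \<longlonglongrightarrow> l"
proof -
  have diff_meas: "(\<lambda>s. g k s - g_lim s) \<in> borel_measurable (lebesgue_on S)" for k
    using g_meas g_lim_meas by measurable
  have diff_bound: "\<bar>g k s - g_lim s\<bar> \<le> 2 * M" if "s \<in> S" for k s
    using g_bound[OF that, of k] g_lim_bound[OF that] by linarith
  have "integral S (\<lambda>s. y k s * g k s)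
      = integral S (\<lambda>s. y k s * g_lim s) + integral S (\<lambda>s. y k s * (g k s - g_lim s))" for k
  proof -
    have "(\<lambda>s. y k s * g_lim s) integrable_on S" "(\<lambda>s. y k s * (g k s - g_lim s)) integrable_on S"
      using absolutely_integrable_mult_bounded[OF y S g_lim_meas g_lim_bound]
        absolutely_integrable_mult_bounded[OF y S diff_meas diff_bound]
      by (auto intro: set_lebesgue_integral_eq_integral(1))
    then show ?thesis
      by (simp add: integral_add[symmetric] algebra_simps)
  qed
  moreover have "(\<lambda>k. integral S (\<lambda>s. y k s * (g k s - g_lim s))) \<longlonglongrightarrow> 0"
  proof (rule tendsto_integral_mult_uniform_limit_zero[OF S y bound diff_meas])
    show "uniform_limit S (\<lambda>k s. g k s - g_lim s) (\<lambda>_. 0) sequentially"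
      using uniform_limit_minus[OF unif uniform_limit_const[where c = g_lim]] by simp
  qed
  ultimately show ?thesis
    using tendsto_add[OF weak] by fastforce
qed

locale eta_nonlinearity =
  fixes \<phi> :: "real \<Rightarrow> real" and L :: real
  assumes continuous_phi: "continuous_on UNIV \<phi>" and abs_phi_le: "\<And>x. \<bar>\<phi> x\<bar> \<le> L"
begin

lemma phi_piu_measurable:
  assumes "L2m m T v" "r \<le> T"
  shows "(\<lambda>s. \<phi> (piu a b m v s)) \<in> borel_measurable (lebesgue_on {0..r})"
  using assms
  by (intro continuous_imp_measurable_on_sets_lebesgue continuous_on_compose2[OF continuous_phi]
      continuous_on_subset[OF continuous_on_piu]) auto

lemma absolutely_integrable_eta_integrand:
  assumes "L2m m T v" "j \<in> {1..m}" "r \<le> T"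
  shows "(\<lambda>s. v j s * \<phi> (piu a b m v s)) absolutely_integrable_on {0..r}"
  using assms abs_phi_le
  by (intro absolutely_integrable_mult_bounded[where M = L] L2m_absolutely_integrable phi_piu_measurable) auto

lemma eta_eq_integral:
  assumes "L2m m T v" "j \<in> {1..m}" "r \<le> T"
  shows "eta \<phi> a b m j v r = integral {0..r} (\<lambda>s. v j s * \<phi> (piu a b m v s))"
  unfolding eta_def by (rule set_lebesgue_integral_eq_integral(2)[OF absolutely_integrable_eta_integrand[OF assms]])

lemma abs_eta_le:
  assumes v: "L2m m T v" and j: "j \<in> {1..m}" and r: "r \<in> {0..T}"
    and bound: "integral {0..T} (\<lambda>s. \<bar>v j s\<bar>) \<le> B"
  shows "\<bar>eta \<phi> a b m j v r\<bar> \<le> L * B"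
proof -
  have "0 \<le> L"
    using abs_phi_le[of 0] by linarith
  have "eta \<phi> a b m j v r = integral {0..r} (\<lambda>s. v j s * \<phi> (piu a b m v s))"
    using eta_eq_integral[OF v j] r by simp
  also have "\<bar>\<dots>\<bar> \<le> L * integral {0..r} (\<lambda>s. \<bar>v j s\<bar>)"
    using r abs_phi_le
    by (intro abs_integral_mult_bounded_le[where M = L] L2m_absolutely_integrable[OF v j] phi_piu_measurable[OF v]) auto
  also have "\<dots> \<le> L * B"
    using integral_abs_subinterval_le[OF L2m_absolutely_integrable[OF v j order_refl] r] bound \<open>0 \<le> L\<close>
    by (intro mult_left_mono) auto
  finally show ?thesis .
qed

lemma continuous_on_eta:
  assumes v: "L2m m T v" and j: "j \<in> {1..m}"
  shows "continuous_on {0..T} (eta \<phi> a b m j v)"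
proof -
  have "continuous_on {0..T} (\<lambda>r. integral {0..r} (\<lambda>s. v j s * \<phi> (piu a b m v s)))"
    by (intro indefinite_integral_continuous_1 set_lebesgue_integral_eq_integral(1)
        absolutely_integrable_eta_integrand[OF v j]) simp
  then show ?thesis
    by (rule continuous_on_eq) (simp add: eta_eq_integral[OF v j])
qed

lemma rho_eq_integral:
  assumes v: "L2m m T v" and j: "j \<in> {1..m}" and t: "t \<le> T"
  shows "rho \<phi> a b m j v t = integral {0..t} (eta \<phi> a b m j v)"
  unfolding rho_def using t
  by (intro set_lebesgue_integral_eq_integral(2) absolutely_integrable_continuous_real
      continuous_on_subset[OF continuous_on_eta[OF v j]]) auto

end

locale weakly_convergent_L2m =
  fixes m :: nat and T :: real and U :: "nat \<Rightarrow> nat \<Rightarrow> real \<Rightarrow> real" and u :: "nat \<Rightarrow> real \<Rightarrow> real"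
  assumes L2m_U: "\<And>k. L2m m T (U k)" and L2m_u: "L2m m T u" and weak_conv: "weak_conv_L2m m T U u"
begin

lemma tendsto_integral_mult_bounded:
  assumes j: "j \<in> {1..m}" and g_meas: "g \<in> borel_measurable (lebesgue_on {0..T})"
    and g_bound: "\<And>s. s \<in> {0..T} \<Longrightarrow> \<bar>g s\<bar> \<le> M"
  shows "(\<lambda>k. integral {0..T} (\<lambda>s. U k j s * g s)) \<longlonglongrightarrow> integral {0..T} (\<lambda>s. u j s * g s)"
proof -
  have LINT_eq: "(LINT s:{0..T}|lebesgue. w s * g s) = integral {0..T} (\<lambda>s. w s * g s)" if "L2 T w" for w
    by (intro set_lebesgue_integral_eq_integral(2) absolutely_integrable_mult_bounded[where M = M]
        L2_absolutely_integrable[OF that] g_meas g_bound) auto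
  have "L2 T (U k j)" "L2 T (u j)" for k
    using L2m_U L2m_u j by (auto simp: L2m_def)
  moreover have "(\<lambda>k. LINT s:{0..T}|lebesgue. U k j s * g s) \<longlonglongrightarrow> (LINT s:{0..T}|lebesgue. u j s * g s)"
    using weak_conv j L2_if_bounded_measurable[OF g_meas g_bound] unfolding weak_conv_L2m_def by blast
  ultimately show ?thesis
    by (simp add: LINT_eq)
qed

lemma tendsto_integral_mult_bounded_subinterval:
  assumes j: "j \<in> {1..m}" and g_meas: "g \<in> borel_measurable (lebesgue_on {0..T})"
    and g_bound: "\<And>s. s \<in> {0..T} \<Longrightarrow> \<bar>g s\<bar> \<le> M" and r: "r \<in> {0..T}"
  shows "(\<lambda>k. integral {0..r} (\<lambda>s. U k j s * g s)) \<longlonglongrightarrow> integral {0..r} (\<lambda>s. u j s * g s)"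
proof -
  define g_r where "g_r s = indicator {0..r} s * g s" for s :: real
  have "0 \<le> M"
    using g_bound[OF r] by linarith
  have "g_r \<in> borel_measurable (lebesgue_on {0..T})"
    unfolding g_r_def
    by (intro borel_measurable_times g_meas measurable_restrict_space1 borel_measurable_indicator) simp
  moreover have "\<bar>g_r s\<bar> \<le> M" if "s \<in> {0..T}" for s
    using g_bound[OF that] \<open>0 \<le> M\<close> by (simp add: g_r_def indicator_def)
  moreover have "integral {0..T} (\<lambda>s. w s * g_r s) = integral {0..r} (\<lambda>s. w s * g s)" for w :: "real \<Rightarrow> real"
  proof -
    have "(\<lambda>s. w s * g_r s) = (\<lambda>s. if s \<in> {0..r} then w s * g s else 0)"
      by (auto simp: g_r_def indicator_def)
    then have "integral {0..T} (\<lambda>s. w s * g_r s) = integral ({0..r} \<inter> {0..T}) (\<lambda>s. w s * g s)"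
      by (simp only: Henstock_Kurzweil_Integration.integral_restrict_Int)
    also have "{0..r} \<inter> {0..T} = {0..r}"
      using r by auto
    finally show ?thesis .
  qed
  ultimately show ?thesis
    using tendsto_integral_mult_bounded[OF j, of g_r M] by simp
qed

lemma L1_bounded:
  obtains B where "0 \<le> B" "\<And>k j. j \<in> {1..m} \<Longrightarrow> integral {0..T} (\<lambda>s. \<bar>U k j s\<bar>) \<le> B"
    "\<And>j. j \<in> {1..m} \<Longrightarrow> integral {0..T} (\<lambda>s. \<bar>u j s\<bar>) \<le> B"
proof -
  have Bseq_U: "Bseq (\<lambda>k. integral {0..T} (\<lambda>s. \<bar>U k j s\<bar>))" if j: "j \<in> {1..m}" for j
  proof (rule Bseq_integral_abs_if_Bseq_pairings)
    show "U k j absolutely_integrable_on {0..T}" for k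
      by (rule L2m_absolutely_integrable[OF L2m_U j order_refl])
    show "Bseq (\<lambda>k. integral {0..T} (\<lambda>s. U k j s * g s))"
      if "g \<in> borel_measurable (lebesgue_on {0..T})" "\<And>s. s \<in> {0..T} \<Longrightarrow> \<bar>g s\<bar> \<le> M" for g M
      using tendsto_integral_mult_bounded[OF j that] by (intro convergent_imp_Bseq convergentI)
  qed simp
  define X where "X = (\<Union>j\<in>{1..m}. range (\<lambda>k. integral {0..T} (\<lambda>s. \<bar>U k j s\<bar>)))
      \<union> (\<lambda>j. integral {0..T} (\<lambda>s. \<bar>u j s\<bar>)) ` {1..m}"
  have "bounded (range (\<lambda>k. integral {0..T} (\<lambda>s. \<bar>U k j s\<bar>)))" if "j \<in> {1..m}" for j
    using Bseq_U[OF that] by (simp add: Bseq_eq_bounded)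
  then have "bounded X"
    unfolding X_def bounded_Un by (auto intro: bounded_UN finite_imp_bounded)
  then obtain B where "0 < B" and B: "\<And>x. x \<in> X \<Longrightarrow> norm x \<le> B"
    unfolding bounded_pos by blast
  then have le_B: "x \<le> B" if "x \<in> X" for x
    using B[OF that] by simp
  show thesis
  proof (rule that[of B])
    show "0 \<le> B"
      using \<open>0 < B\<close> by simp
    show "integral {0..T} (\<lambda>s. \<bar>U k j s\<bar>) \<le> B" if "j \<in> {1..m}" for k j
      using that unfolding X_def by (blast intro: le_B[unfolded X_def])
    show "integral {0..T} (\<lambda>s. \<bar>u j s\<bar>) \<le> B" if "j \<in> {1..m}" for j
      using that unfolding X_def by (blast intro: le_B[unfolded X_def])
  qed
qed

lemma tendsto_piu:
  assumes t: "t \<in> {0..T}"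
  shows "(\<lambda>k. piu a b m (U k) t) \<longlonglongrightarrow> piu a b m u t"
proof -
  obtain B where B: "\<And>k j. j \<in> {1..m} \<Longrightarrow> integral {0..T} (\<lambda>s. \<bar>U k j s\<bar>) \<le> B"
    using L1_bounded by metis
  have "(\<lambda>k. integral {0..t} (\<lambda>r. integral {0..r} (U k j))) \<longlonglongrightarrow> integral {0..t} (\<lambda>r. integral {0..r} (u j))"
    if j: "j \<in> {1..m}" for j
  proof (rule dominated_convergence(2)[where f = "\<lambda>k r. integral {0..r} (U k j)" and h = "\<lambda>_. B"
        and g = "\<lambda>r. integral {0..r} (u j)"])
    show "(\<lambda>r. integral {0..r} (U k j)) integrable_on {0..t}" for k
      using t by (intro integrable_continuous_interval indefinite_integral_continuous_1
          set_lebesgue_integral_eq_integral(1) L2m_absolutely_integrable[OF L2m_U j]) auto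
    show "norm (integral {0..r} (U k j)) \<le> B" if "r \<in> {0..t}" for k r
      using order_trans[OF abs_indefinite_integral_le[OF L2m_absolutely_integrable[OF L2m_U j order_refl]] B[OF j]]
        that t by simp
    show "(\<lambda>k. integral {0..r} (U k j)) \<longlonglongrightarrow> integral {0..r} (u j)" if "r \<in> {0..t}" for r
      using tendsto_integral_mult_bounded_subinterval[where g = "\<lambda>_. 1" and M = 1, OF j] that t by simp
  qed (rule Henstock_Kurzweil_Integration.integrable_const_ivl)
  then show ?thesis
    unfolding piu_eq_integral[OF L2m_U t] piu_eq_integral[OF L2m_u t] by (intro tendsto_intros) auto
qed

lemma uniform_limit_piu: "uniform_limit {0..T} (\<lambda>k. piu a b m (U k)) (piu a b m u) sequentially"
proof -
  obtain B where "0 \<le> B" and B_U: "\<And>k j. j \<in> {1..m} \<Longrightarrow> integral {0..T} (\<lambda>s. \<bar>U k j s\<bar>) \<le> B"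
    and B_u: "\<And>j. j \<in> {1..m} \<Longrightarrow> integral {0..T} (\<lambda>s. \<bar>u j s\<bar>) \<le> B"
    by (fact L1_bounded)
  show ?thesis
  proof (rule uniform_limit_if_equi_lipschitz[OF compact_Icc])
    show "((\<Sum>j=1..m. \<bar>b j\<bar>) * B)-lipschitz_on {0..T} (piu a b m (U k))" for k
      by (rule lipschitz_on_piu[OF L2m_U \<open>0 \<le> B\<close> B_U])
    show "((\<Sum>j=1..m. \<bar>b j\<bar>) * B)-lipschitz_on {0..T} (piu a b m u)"
      by (rule lipschitz_on_piu[OF L2m_u \<open>0 \<le> B\<close> B_u])
  qed (rule tendsto_piu)
qed

end

locale weakly_convergent_eta = weakly_convergent_L2m m T U u + eta_nonlinearity \<phi> L
  for m T U u \<phi> L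
begin

lemma uniform_limit_phi_piu:
  "uniform_limit {0..T} (\<lambda>k s. \<phi> (piu a b m (U k) s)) (\<lambda>s. \<phi> (piu a b m u s)) sequentially"
proof -
  obtain B where "0 \<le> B" and B_U: "\<And>k j. j \<in> {1..m} \<Longrightarrow> integral {0..T} (\<lambda>s. \<bar>U k j s\<bar>) \<le> B"
    using L1_bounded by metis
  define R where "R = \<bar>a\<bar> + (\<Sum>j=1..m. \<bar>b j\<bar>) * B * T"
  have "uniformly_continuous_on (cball 0 R) \<phi>"
    by (intro compact_uniformly_continuous continuous_on_subset[OF continuous_phi]) auto
  moreover have "\<forall>s\<in>{0..T}. piu a b m (U k) s \<in> cball 0 R" for k
    using abs_piu_le[OF L2m_U \<open>0 \<le> B\<close> B_U] by (simp add: R_def)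
  ultimately show ?thesis
    by (intro uniform_limit_compose_uniformly_continuous_on[OF uniform_limit_piu]) auto
qed

lemma tendsto_eta:
  assumes j: "j \<in> {1..m}" and r: "r \<in> {0..T}"
  shows "(\<lambda>k. eta \<phi> a b m j (U k) r) \<longlonglongrightarrow> eta \<phi> a b m j u r"
proof -
  obtain B where B_U: "\<And>k j. j \<in> {1..m} \<Longrightarrow> integral {0..T} (\<lambda>s. \<bar>U k j s\<bar>) \<le> B"
    using L1_bounded by metis
  have "r \<le> T"
    using r by simp
  have "(\<lambda>k. integral {0..r} (\<lambda>s. U k j s * \<phi> (piu a b m (U k) s)))
      \<longlonglongrightarrow> integral {0..r} (\<lambda>s. u j s * \<phi> (piu a b m u s))"
  proof (rule tendsto_integral_mult_uniform_limit[where M = L])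
    show "U k j absolutely_integrable_on {0..r}" for k
      by (rule L2m_absolutely_integrable[OF L2m_U j \<open>r \<le> T\<close>])
    show "integral {0..r} (\<lambda>s. \<bar>U k j s\<bar>) \<le> B" for k
      using integral_abs_subinterval_le[OF L2m_absolutely_integrable[OF L2m_U j order_refl] r] B_U[OF j]
      by (rule order_trans)
    show "(\<lambda>s. \<phi> (piu a b m (U k) s)) \<in> borel_measurable (lebesgue_on {0..r})" for k
      by (rule phi_piu_measurable[OF L2m_U \<open>r \<le> T\<close>])
    show "(\<lambda>s. \<phi> (piu a b m u s)) \<in> borel_measurable (lebesgue_on {0..r})"
      by (rule phi_piu_measurable[OF L2m_u \<open>r \<le> T\<close>])
    show "uniform_limit {0..r} (\<lambda>k s. \<phi> (piu a b m (U k) s)) (\<lambda>s. \<phi> (piu a b m u s)) sequentially"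
      by (rule uniform_limit_on_subset[OF uniform_limit_phi_piu]) (use \<open>r \<le> T\<close> in auto)
    show "(\<lambda>k. integral {0..r} (\<lambda>s. U k j s * \<phi> (piu a b m u s)))
        \<longlonglongrightarrow> integral {0..r} (\<lambda>s. u j s * \<phi> (piu a b m u s))"
      by (rule tendsto_integral_mult_bounded_subinterval[OF j phi_piu_measurable[OF L2m_u order_refl] _ r,
            where M = L]) (rule abs_phi_le)
  qed (auto simp: abs_phi_le)
  then show ?thesis
    by (simp add: eta_eq_integral[OF L2m_U j \<open>r \<le> T\<close>] eta_eq_integral[OF L2m_u j \<open>r \<le> T\<close>])
qed

lemma tendsto_rho:
  assumes j: "j \<in> {1..m}" and t: "t \<in> {0..T}"
  shows "(\<lambda>k. rho \<phi> a b m j (U k) t) \<longlonglongrightarrow> rho \<phi> a b m j u t"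
proof -
  obtain B where B_U: "\<And>k j. j \<in> {1..m} \<Longrightarrow> integral {0..T} (\<lambda>s. \<bar>U k j s\<bar>) \<le> B"
    using L1_bounded by metis
  have "(\<lambda>k. integral {0..t} (eta \<phi> a b m j (U k))) \<longlonglongrightarrow> integral {0..t} (eta \<phi> a b m j u)"
  proof (rule dominated_convergence(2)[where f = "\<lambda>k. eta \<phi> a b m j (U k)" and g = "eta \<phi> a b m j u"
        and h = "\<lambda>_. L * B"])
    show "eta \<phi> a b m j (U k) integrable_on {0..t}" for k
      using t by (intro integrable_continuous_interval continuous_on_subset[OF continuous_on_eta[OF L2m_U j]]) auto
    show "norm (eta \<phi> a b m j (U k) r) \<le> L * B" if "r \<in> {0..t}" for k r
      using abs_eta_le[OF L2m_U j _ B_U[OF j]] that t by simp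
    show "(\<lambda>k. eta \<phi> a b m j (U k) r) \<longlonglongrightarrow> eta \<phi> a b m j u r" if "r \<in> {0..t}" for r
      using tendsto_eta[OF j] that t by simp
  qed (rule Henstock_Kurzweil_Integration.integrable_const_ivl)
  then show ?thesis
    using t by (simp add: rho_eq_integral[OF L2m_U j] rho_eq_integral[OF L2m_u j])
qed

end

theorem lemma2p11:
  fixes m :: nat and T a L1 :: real and b :: "nat \<Rightarrow> real" and \<phi> :: "real \<Rightarrow> real"
    and U :: "nat \<Rightarrow> nat \<Rightarrow> real \<Rightarrow> real" and u :: "nat \<Rightarrow> real \<Rightarrow> real"
  assumes "T > 0"
    and "continuous_on UNIV \<phi>"
    and "L1 > 0" and "\<And>s. \<bar>\<phi> s\<bar> \<le> L1"
    and "\<And>k. L2m m T (U k)"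
    and "L2m m T u"
    and "weak_conv_L2m m T U u"
  shows "\<forall>j\<in>{1..m}.
           (\<forall>r\<in>{0..T}. (\<lambda>k. eta \<phi> a b m j (U k) r) \<longlonglongrightarrow> eta \<phi> a b m j u r)
         \<and> (\<forall>t\<in>{0..T}. (\<lambda>k. rho \<phi> a b m j (U k) t) \<longlonglongrightarrow> rho \<phi> a b m j u t)"
proof -
  interpret weakly_convergent_eta m T U u \<phi> L1
    by unfold_locales (use assms in auto)
  show ?thesis
    using tendsto_eta tendsto_rho by blast
qed

end
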